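(* Let $2\le n_1<n_2$. Under exogenous participation and CRRA utility $u(w)=w^{1-\theta}/(1-\theta)$ with $\theta\in[0,1)$, the model structure $(F_0,D,\theta)$ is identified from the equilibrium bid distributions $G(\cdot\mid n_1)$ and $G(\cdot\mid n_2)$: any two such structures that induce the same pair $(G(\cdot\mid n_1),G(\cdot\mid n_2))$ coincide.
   Context: First-price auctions (no reserve price) with $n$ bidders, $n\in\{n_1,n_2\}$. Bidders' values are i.i.d. from $F_0$ on $[\underline v,\overline v]$ with continuous density $f_0>0$. Bidders have utility $u(w)=w^{1-\theta}/(1-\theta)$, $\theta\in[0,1)$, and maxmin expected utility over a weakly compact convex set $\Gamma$ of strictly increasing $C^1$ distributions on $[\underline v,\overline v]$ containing $F_0$, with least element $F^*\in\Gamma$ ($F^*\le F$ pointwise for all $F\in\Gamma$) having density $f^*>0$. Define $D(\gamma)=F^*(F_0^{-1}(\gamma))$ on $[0,1]$ ($D$ strictly increasing, $C^1$, $D(0)=0$, $D(1)=1$, $D(\gamma)\le\gamma$, $D'(0)>0$). Exogenous participation: $F_0$ and $\Gamma$ (hence $D$) do not depend on $n$. For $n$ bidders, a symmetric equilibrium is a strictly increasing differentiable $\beta_n$ such that for every value $v$, $x=v$ maximizes $u[v-\beta_n(x)]D[F_0(x)]^{n-1}$; $G(\cdot\mid n)$ is the distribution of $\beta_n(v)$ for $v\sim F_0$, with density $g(\cdot\mid n)$. *)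

theory Defs
  imports "HOL-Analysis.Analysis"
begin

definition crra :: "real \<Rightarrow> real \<Rightarrow> real" where
  "crra \<theta> w = (if 0 \<le> w then w powr (1 - \<theta>) / (1 - \<theta>)
                 else - ((- w) powr (1 - \<theta>)) / (1 - \<theta>))"

definition value_cdf :: "real \<Rightarrow> real \<Rightarrow> (real \<Rightarrow> real) \<Rightarrow> bool" where
  "value_cdf vlo vhi F0 \<longleftrightarrow>
     vlo < vhi \<and>
     (\<forall>v. v \<le> vlo \<longrightarrow> F0 v = 0) \<and>
     (\<forall>v. vhi \<le> v \<longrightarrow> F0 v = 1) \<and>
     (\<exists>f0. continuous_on {vlo..vhi} f0 \<and>
        (\<forall>v\<in>{vlo..vhi}. 0 < f0 v \<and> (F0 has_real_derivative f0 v) (at v within {vlo..vhi})))"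

text \<open>Ambiguity distortion D(gamma) = F*(F0^{-1}(gamma)) on [0,1].\<close>
definition distortion :: "(real \<Rightarrow> real) \<Rightarrow> bool" where
  "distortion D \<longleftrightarrow>
     strict_mono_on {0..1} D \<and> D 0 = 0 \<and> D 1 = 1 \<and>
     (\<forall>\<gamma>\<in>{0..1}. D \<gamma> \<le> \<gamma>) \<and>
     (\<exists>d. continuous_on {0..1} d \<and>
        (\<forall>\<gamma>\<in>{0..1}. (D has_real_derivative d \<gamma>) (at \<gamma> within {0..1})) \<and> 0 < d 0)"

definition model_structure :: "real \<Rightarrow> real \<Rightarrow> (real \<Rightarrow> real) \<Rightarrow> (real \<Rightarrow> real) \<Rightarrow> real \<Rightarrow> bool" where
  "model_structure vlo vhi F0 D \<theta> \<longleftrightarrow> value_cdf vlo vhi F0 \<and> distortion D \<and> 0 \<le> \<theta> \<and> \<theta> < 1"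

definition equilibrium ::
  "real \<Rightarrow> real \<Rightarrow> (real \<Rightarrow> real) \<Rightarrow> (real \<Rightarrow> real) \<Rightarrow> real \<Rightarrow> nat \<Rightarrow> (real \<Rightarrow> real) \<Rightarrow> bool" where
  "equilibrium vlo vhi F0 D \<theta> n \<beta> \<longleftrightarrow>
     strict_mono_on {vlo..vhi} \<beta> \<and>
     (\<forall>v\<in>{vlo..vhi}. \<beta> differentiable (at v within {vlo..vhi})) \<and>
     (\<forall>v\<in>{vlo..vhi}. \<forall>x\<in>{vlo..vhi}.
        crra \<theta> (v - \<beta> x) * (D (F0 x)) ^ (n - 1) \<le> crra \<theta> (v - \<beta> v) * (D (F0 v)) ^ (n - 1))"

definition bid_cdf :: "real \<Rightarrow> real \<Rightarrow> (real \<Rightarrow> real) \<Rightarrow> (real \<Rightarrow> real) \<Rightarrow> real \<Rightarrow> real" where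
  "bid_cdf vlo vhi F0 \<beta> b = measure (interval_measure F0) {v \<in> {vlo..vhi}. \<beta> v \<le> b}"

end

theory Submission
  imports Defs
begin

(*
  Write V = F0^-1 for the value quantile and B_n(t) = beta_n(V t) for the bid quantile; G(.|n)
  determines B_n on (0,1). Differentiating the payoff of a bidder of type V t who mimics type
  V s at s = t gives the first-order condition

    (1 - theta) D(t) B_n'(t) = (n - 1) (V t - B_n t) D'(t).

  The factor (1 - theta) D/D' does not depend on n, so the conditions for n1 and n2 are two
  linear equations in (V t, (1 - theta) D t / D' t), uniquely solvable whenever B_n1 t <> B_n2 t.
  Such points with D' t > 0 are dense, hence V, and with it F0, is identified. The first-order
  condition then identifies (1 - theta) D/D'; since D t / t -> D'(0) > 0, letting t -> 0
  identifies theta, after which D'/D is identified and D(1) = 1 pins down D.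
*)

lemma quantile_point_unique:
  fixes G :: "real \<Rightarrow> real"
  assumes "\<And>b. b < q \<Longrightarrow> G b < t" and "\<And>b. q < b \<Longrightarrow> t < G b"
    and "\<And>b. b < q' \<Longrightarrow> G b < t" and "\<And>b. q' < b \<Longrightarrow> t < G b"
  shows "q = q'"
proof (rule ccontr)
  assume "q \<noteq> q'"
  then consider "q < q'" | "q' < q" by linarith
  then show False
  proof cases
    case 1
    then have "t < G ((q + q') / 2)" "G ((q + q') / 2) < t" using assms(2,3) by auto
    then show False by simp
  next
    case 2
    then have "t < G ((q + q') / 2)" "G ((q + q') / 2) < t" using assms(1,4) by auto
    then show False by simp
  qed
qed

lemma continuous_on_Icc_exceeds_left:
  fixes g :: "real \<Rightarrow> real"
  assumes "continuous_on {a..v} g" "a < v" "c < g v"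
  obtains x where "a < x" "x < v" "c < g x"
proof -
  have "(g \<longlongrightarrow> g v) (at_left v)" using continuous_on_Icc_at_leftD assms(1,2) .
  then have "eventually (\<lambda>x. c < g x \<and> x \<in> {a<..<v}) (at_left v)"
    using order_tendstoD(1)[OF _ assms(3)] eventually_at_left_real[OF assms(2)] eventually_conj by blast
  then show ?thesis using that eventually_happens' trivial_limit_at_left_real by fastforce
qed

lemma continuous_on_Icc_below_right:
  fixes g :: "real \<Rightarrow> real"
  assumes "continuous_on {v..a} g" "v < a" "g v < c"
  obtains x where "v < x" "x < a" "g x < c"
proof -
  have "(g \<longlongrightarrow> g v) (at_right v)" using continuous_on_Icc_at_rightD assms(1,2) .
  then have "eventually (\<lambda>x. g x < c \<and> x \<in> {v<..<a}) (at_right v)"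
    using order_tendstoD(2)[OF _ assms(3)] eventually_at_right_real[OF assms(2)] eventually_conj by blast
  then show ?thesis using that eventually_happens' trivial_limit_at_right_real by fastforce
qed

lemma continuous_on_Icc_eq_if_eq_densely:
  fixes f g :: "real \<Rightarrow> real"
  assumes "a < b" "continuous_on {a..b} f" "continuous_on {a..b} g"
    and dense: "\<And>x y. a \<le> x \<Longrightarrow> x < y \<Longrightarrow> y \<le> b \<Longrightarrow> \<exists>z\<in>{x<..<y}. f z = g z"
    and "t \<in> {a..b}"
  shows "f t = g t"
proof -
  have "closed {x \<in> {a..b}. f x - g x = 0}"
    using assms(2,3) by (intro continuous_closed_preimage_constant continuous_on_diff) auto
  moreover have "\<exists>z\<in>{x \<in> {a..b}. f x - g x = 0}. dist z t < e" if "0 < e" for e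
  proof -
    obtain z where "z \<in> {max a (t - e/2)<..<min b (t + e/2)}" "f z = g z"
      using dense[of "max a (t - e/2)" "min b (t + e/2)"] assms(1,5) \<open>0 < e\<close> by auto
    then show ?thesis by (intro bexI[of _ z]) (auto simp: dist_real_def)
  qed
  ultimately have "t \<in> {x \<in> {a..b}. f x - g x = 0}" using closed_approachable by blast
  then show ?thesis by simp
qed

lemma linear_foc_system_unique:
  fixes m1 m2 a1 a2 b1 b2 K \<delta> K' \<delta>' v v' :: real
  assumes "m1 \<noteq> 0" "m2 \<noteq> 0" "\<delta> \<noteq> 0" "\<delta>' \<noteq> 0" "b1 \<noteq> b2"
    and "K * a1 = m1 * (v - b1) * \<delta>" "K * a2 = m2 * (v - b2) * \<delta>"
    and "K' * a1 = m1 * (v' - b1) * \<delta>'" "K' * a2 = m2 * (v' - b2) * \<delta>'"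
  shows "v = v'"
proof -
  have v: "v - b1 = K / \<delta> * (a1 / m1)" "v - b2 = K / \<delta> * (a2 / m2)"
    and v': "v' - b1 = K' / \<delta>' * (a1 / m1)" "v' - b2 = K' / \<delta>' * (a2 / m2)"
    using assms by (simp_all add: field_simps)
  define X where "X = a1 / m1 - a2 / m2"
  have "b2 - b1 = K / \<delta> * X" "b2 - b1 = K' / \<delta>' * X"
    using v v' unfolding X_def by (simp_all add: algebra_simps)
  moreover have "X \<noteq> 0" using calculation(1) assms(5) by auto
  ultimately have "K / \<delta> = K' / \<delta>'" by (metis mult_right_cancel)
  then show ?thesis using v(1) v'(1) by simp
qed

locale interval_cdf =
  fixes lo hi :: real and F f :: "real \<Rightarrow> real"
  assumes lo_less_hi: "lo < hi"
    and F_below: "v \<le> lo \<Longrightarrow> F v = 0"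
    and F_above: "hi \<le> v \<Longrightarrow> F v = 1"
    and density_pos: "v \<in> {lo..hi} \<Longrightarrow> 0 < f v"
    and F_deriv: "v \<in> {lo..hi} \<Longrightarrow> (F has_real_derivative f v) (at v within {lo..hi})"
begin

lemma F_lo [simp]: "F lo = 0" and F_hi [simp]: "F hi = 1"
  using F_below F_above by auto

lemma continuous_on_F_Icc: "continuous_on {lo..hi} F"
  using DERIV_continuous_on F_deriv by blast

lemma F_deriv_at: "lo < v \<Longrightarrow> v < hi \<Longrightarrow> (F has_real_derivative f v) (at v)"
  using F_deriv[of v] at_within_Icc_at[of lo v hi] by simp

lemma F_less:
  assumes "lo \<le> x" "x < y" "y \<le> hi"
  shows "F x < F y"
proof (rule DERIV_pos_imp_increasing_open[OF assms(2)])
  show "continuous_on {x..y} F"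
    using continuous_on_F_Icc by (rule continuous_on_subset) (use assms in auto)
  fix z assume "x < z" "z < y"
  then show "\<exists>l. (F has_real_derivative l) (at z) \<and> 0 < l"
    using assms by (intro exI[of _ "f z"] conjI F_deriv_at density_pos) auto
qed

lemma F_range: "F v \<in> {0..1}"
  using F_below[of v] F_above[of v] F_less[of lo v] F_less[of v hi] lo_less_hi by fastforce

lemma F_mono: "x \<le> y \<Longrightarrow> F x \<le> F y"
  using F_range[of x] F_range[of y] F_below[of x] F_above[of y] F_less[of x y] lo_less_hi
  by (cases "x \<le> lo \<or> hi \<le> y \<or> x = y") auto

lemma continuous_F: "continuous_on UNIV F"
proof -
  have "(\<lambda>v. F (min hi (max lo v))) = F"
    using F_below F_above lo_less_hi by (auto simp: fun_eq_iff min_def max_def)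
  moreover have "continuous_on UNIV (\<lambda>v. F (min hi (max lo v)))"
    by (rule continuous_on_compose2[OF continuous_on_F_Icc])
      (auto intro!: continuous_intros simp: lo_less_hi less_imp_le)
  ultimately show ?thesis by metis
qed

lemma fmeasurable_Icc: "{lo..x} \<in> fmeasurable (interval_measure F)"
  and measure_Icc: "lo \<le> x \<Longrightarrow> measure (interval_measure F) {lo..x} = F x"
proof -
  have "emeasure (interval_measure F) {lo..x} = ennreal (F x)" if "lo \<le> x"
    using emeasure_interval_measure_Icc[OF that F_mono continuous_F] by simp
  then show "{lo..x} \<in> fmeasurable (interval_measure F)"
    by (cases "lo \<le> x") (auto simp: fmeasurable_def)
  show "lo \<le> x \<Longrightarrow> measure (interval_measure F) {lo..x} = F x"
    using \<open>lo \<le> x \<Longrightarrow> _\<close> F_range[of x] by (simp add: measure_def)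
qed

lemma F_image: "F ` {lo..hi} = {0..1}"
proof
  show "{0..1} \<subseteq> F ` {lo..hi}"
    using IVT'[of F lo _ hi] lo_less_hi continuous_on_F_Icc by (fastforce simp: image_iff)
qed (use F_range in auto)

lemma inj_on_F: "inj_on F {lo..hi}"
  by (rule strict_mono_on_imp_inj_on) (auto simp: strict_mono_on_def F_less)

definition quantile :: "real \<Rightarrow> real" where
  "quantile = inv_into {lo..hi} F"

lemma quantile_in: "t \<in> {0..1} \<Longrightarrow> quantile t \<in> {lo..hi}"
  unfolding quantile_def using F_image by (metis inv_into_into)

lemma F_quantile: "t \<in> {0..1} \<Longrightarrow> F (quantile t) = t"
  unfolding quantile_def using F_image by (metis f_inv_into_f)

lemma quantile_F: "v \<in> {lo..hi} \<Longrightarrow> quantile (F v) = v"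
  unfolding quantile_def using inj_on_F by (rule inv_into_f_f)

lemma quantile_0: "quantile 0 = lo" and quantile_1: "quantile 1 = hi"
  using quantile_F[of lo] quantile_F[of hi] lo_less_hi by auto

lemma quantile_interior:
  assumes "t \<in> {0<..<1}"
  shows "quantile t \<in> {lo<..<hi}"
proof -
  have "quantile t \<in> {lo..hi}" "F (quantile t) = t"
    using assms quantile_in[of t] F_quantile[of t] by auto
  moreover from calculation(2) have "quantile t \<noteq> lo" "quantile t \<noteq> hi"
    using assms by auto
  ultimately show ?thesis by auto
qed

lemma continuous_on_quantile: "continuous_on {0..1} quantile"
  using continuous_on_inv[OF continuous_on_F_Icc compact_Icc] quantile_F F_image by auto

lemma quantile_deriv:
  assumes "t \<in> {0<..<1}"
  shows "(quantile has_real_derivative inverse (f (quantile t))) (at t)"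
proof (rule DERIV_inverse_function[where a=0 and b=1])
  show "(F has_real_derivative f (quantile t)) (at (quantile t))"
    using quantile_interior[OF assms] by (intro F_deriv_at) auto
  show "f (quantile t) \<noteq> 0"
    using density_pos[of "quantile t"] quantile_interior[OF assms] by auto
  show "isCont quantile t"
    using continuous_on_interior[OF continuous_on_quantile] assms by simp
qed (use assms F_quantile in auto)

lemma cdf_eq_if_quantile_eq:
  assumes "interval_cdf lo' hi' F' f'"
    and "\<And>t. t \<in> {0..1} \<Longrightarrow> quantile t = interval_cdf.quantile lo' hi' F' t"
  shows "F = F'"
proof
  interpret C: interval_cdf lo' hi' F' f' by fact
  have lo: "lo = lo'" and hi: "hi = hi'"
    using assms(2)[of 0] assms(2)[of 1] quantile_0 quantile_1 C.quantile_0 C.quantile_1 by auto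
  fix v
  consider "v \<le> lo" | "hi \<le> v" | "v \<in> {lo..hi}" by fastforce
  then show "F v = F' v"
  proof cases
    case 3
    then show ?thesis
      using C.F_quantile[of "F v"] assms(2)[of "F v"] quantile_F F_range by simp
  qed (use F_below F_above C.F_below C.F_above lo hi in auto)
qed

end

locale smooth_distortion =
  fixes D d :: "real \<Rightarrow> real"
  assumes D_strict_mono: "strict_mono_on {0..1} D"
    and D_0 [simp]: "D 0 = 0" and D_1 [simp]: "D 1 = 1"
    and continuous_on_d: "continuous_on {0..1} d"
    and D_deriv: "\<gamma> \<in> {0..1} \<Longrightarrow> (D has_real_derivative d \<gamma>) (at \<gamma> within {0..1})"
    and d_0_pos: "0 < d 0"
begin

lemma continuous_on_D: "continuous_on {0..1} D"
  using DERIV_continuous_on D_deriv by blast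

lemma D_deriv_at: "t \<in> {0<..<1} \<Longrightarrow> (D has_real_derivative d t) (at t)"
  using D_deriv[of t] at_within_Icc_at[of 0 t 1] by simp

lemma D_pos: "0 < t \<Longrightarrow> t \<le> 1 \<Longrightarrow> 0 < D t"
  using strict_mono_onD[OF D_strict_mono, of 0 t] by simp

lemma exists_pos_deriv_between:
  assumes "0 \<le> a" "a < b" "b \<le> 1"
  obtains z where "z \<in> {a<..<b}" "0 < d z"
proof (rule ccontr)
  assume "\<not> thesis"
  then have nonpos: "\<And>z. a < z \<Longrightarrow> z < b \<Longrightarrow> d z \<le> 0" using that by fastforce
  have "D b \<le> D a"
  proof (rule DERIV_nonpos_imp_decreasing_open[of a b D])
    fix z assume "a < z" "z < b"
    then show "\<exists>l. (D has_real_derivative l) (at z) \<and> l \<le> 0"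
      using nonpos assms by (intro exI[of _ "d z"] conjI D_deriv_at) auto
  qed (use assms continuous_on_subset[OF continuous_on_D] in auto)
  moreover have "D a < D b" using strict_mono_onD[OF D_strict_mono] assms by auto
  ultimately show False by simp
qed

lemma d_tendsto_0: "(d \<longlongrightarrow> d 0) (at_right 0)"
  using continuous_on_Icc_at_rightD[OF continuous_on_d] by simp

lemma D_over_id_tendsto_0: "((\<lambda>t. D t / t) \<longlongrightarrow> d 0) (at_right 0)"
  using D_deriv[of 0] at_within_Icc_at_right[of "0::real" 1]
  by (simp add: has_field_derivative_iff)

end

lemma crra_pos_iff: "\<theta> < 1 \<Longrightarrow> 0 < crra \<theta> w \<longleftrightarrow> 0 < w"
  and crra_nonneg_iff: "\<theta> < 1 \<Longrightarrow> 0 \<le> crra \<theta> w \<longleftrightarrow> 0 \<le> w"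
  unfolding crra_def by (auto simp: zero_less_divide_iff divide_less_0_iff divide_le_0_iff)

lemma crra_pos_eq: "0 < w \<Longrightarrow> crra \<theta> w = w * w powr (- \<theta>) / (1 - \<theta>)"
  unfolding crra_def by (simp add: powr_add[of w 1 "- \<theta>", simplified])

lemma crra_deriv: "0 < w \<Longrightarrow> \<theta> < 1 \<Longrightarrow> (crra \<theta> has_real_derivative w powr (- \<theta>)) (at w)"
proof -
  assume w: "0 < w" and \<theta>: "\<theta> < 1"
  have "((\<lambda>x. x powr (1 - \<theta>) / (1 - \<theta>)) has_real_derivative w powr (- \<theta>)) (at w)"
    using has_real_derivative_powr[OF w, of "1 - \<theta>"] \<theta> by (auto intro: DERIV_cdivide[THEN DERIV_cong])
  then show ?thesis
    by (rule has_field_derivative_transform_within_open[where S="{0<..}"]) (use w in \<open>auto simp: crra_def\<close>)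
qed

locale auction_equilibrium = interval_cdf lo hi F f + smooth_distortion D d
  for lo hi F f D d +
  fixes \<theta> :: real and n :: nat and \<beta> :: "real \<Rightarrow> real"
  assumes theta_less_1: "\<theta> < 1"
    and two_le_n: "2 \<le> n"
    and equilibrium: "equilibrium lo hi F D \<theta> n \<beta>"
begin

lemma \<beta>_less: "lo \<le> x \<Longrightarrow> x < y \<Longrightarrow> y \<le> hi \<Longrightarrow> \<beta> x < \<beta> y"
  using equilibrium unfolding equilibrium_def strict_mono_on_def by auto

lemma continuous_on_\<beta>: "continuous_on {lo..hi} \<beta>"
  using equilibrium differentiable_imp_continuous_within
  unfolding equilibrium_def continuous_on_eq_continuous_within by blast

lemma \<beta>_differentiable_at:
  assumes "lo < v" "v < hi"
  shows "\<beta> differentiable (at v)"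
proof -
  have "\<beta> differentiable (at v within {lo..hi})"
    using equilibrium assms unfolding equilibrium_def by auto
  then show ?thesis using at_within_Icc_at[OF assms] by simp
qed

lemma no_profitable_deviation:
  "v \<in> {lo..hi} \<Longrightarrow> x \<in> {lo..hi} \<Longrightarrow>
    crra \<theta> (v - \<beta> x) * D (F x) ^ (n - 1) \<le> crra \<theta> (v - \<beta> v) * D (F v) ^ (n - 1)"
  using equilibrium unfolding equilibrium_def by blast

lemma win_prob_pos: "lo < v \<Longrightarrow> v \<le> hi \<Longrightarrow> 0 < D (F v) ^ (n - 1)"
  using F_less[of lo v] F_range[of v] D_pos[of "F v"] by simp

lemma bid_le_value:
  assumes "lo < v" "v \<le> hi"
  shows "\<beta> v \<le> v"
proof -
  \<comment> \<open>Mimicking the lowest type never wins, since D (F lo) = 0.\<close>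
  have "0 \<le> crra \<theta> (v - \<beta> v) * D (F v) ^ (n - 1)"
    using no_profitable_deviation[of v lo] assms two_le_n by (simp add: power_0_left)
  then show ?thesis
    using win_prob_pos[OF assms] crra_nonneg_iff[OF theta_less_1] by (simp add: zero_le_mult_iff)
qed

lemma bid_less_value:
  assumes "lo < v" "v \<le> hi"
  shows "\<beta> v < v"
proof -
  define x where "x = (lo + v) / 2"
  have x: "lo < x" "x < v" using assms(1) unfolding x_def by auto
  have "0 < v - \<beta> x" using \<beta>_less[of x v] bid_le_value[OF assms] x assms by simp
  then have "0 < crra \<theta> (v - \<beta> x) * D (F x) ^ (n - 1)"
    using crra_pos_iff[OF theta_less_1] win_prob_pos[of x] x assms by simp
  also have "\<dots> \<le> crra \<theta> (v - \<beta> v) * D (F v) ^ (n - 1)"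
    using no_profitable_deviation[of v x] x assms by simp
  finally have "0 < crra \<theta> (v - \<beta> v)"
    using win_prob_pos[OF assms] zero_less_mult_pos2 by blast
  then show ?thesis using crra_pos_iff[OF theta_less_1] by simp
qed

lemma bid_quantile_deriv:
  assumes "t \<in> {0<..<1}"
  obtains a where "((\<lambda>s. \<beta> (quantile s)) has_real_derivative a) (at t)"
proof -
  obtain b where "(\<beta> has_real_derivative b) (at (quantile t))"
    using \<beta>_differentiable_at quantile_interior[OF assms] real_differentiable_def by force
  then show ?thesis using DERIV_chain2[OF _ quantile_deriv[OF assms]] that by blast
qed

lemma truthful_quantile_optimal:
  "t \<in> {0..1} \<Longrightarrow> s \<in> {0..1} \<Longrightarrow>
    crra \<theta> (quantile t - \<beta> (quantile s)) * D s ^ (n - 1)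
      \<le> crra \<theta> (quantile t - \<beta> (quantile t)) * D t ^ (n - 1)"
  using no_profitable_deviation[of "quantile t" "quantile s"] quantile_in F_quantile by simp

lemma first_order_condition:
  assumes t: "t \<in> {0<..<1}" and a: "((\<lambda>s. \<beta> (quantile s)) has_real_derivative a) (at t)"
  shows "(1 - \<theta>) * D t * a = real (n - 1) * (quantile t - \<beta> (quantile t)) * d t"
proof -
  define v where "v = quantile t"
  define w where "w = v - \<beta> v"
  define m where "m = n - 1"
  have w: "0 < w" using bid_less_value quantile_interior[OF t] unfolding w_def v_def by simp
  have Dt: "0 < D t" using D_pos t by simp
  have "m = Suc (m - 1)" using two_le_n unfolding m_def by simp
  then have m: "D t ^ m = D t * D t ^ (m - 1)" by (metis power_Suc)
  have g: "((\<lambda>s. v - \<beta> (quantile s)) has_real_derivative - a) (at t)"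
    using DERIV_diff[OF DERIV_const a] by simp
  have "(crra \<theta> has_real_derivative w powr (- \<theta>)) (at (v - \<beta> (quantile t)))"
    using crra_deriv[OF w theta_less_1] unfolding w_def v_def by simp
  from DERIV_chain2[OF this g]
  have u: "((\<lambda>s. crra \<theta> (v - \<beta> (quantile s))) has_real_derivative w powr (- \<theta>) * - a) (at t)" .
  have p: "((\<lambda>s. D s ^ m) has_real_derivative real m * (d t * D t ^ (m - 1))) (at t)"
    using DERIV_power[OF D_deriv_at[OF t]] by simp
  have "w powr (- \<theta>) * - a * D t ^ m + real m * (d t * D t ^ (m - 1)) * crra \<theta> (v - \<beta> (quantile t)) = 0"
  proof (rule DERIV_local_max[OF DERIV_mult[OF u p]])
    show "0 < min t (1 - t)" using t by simp
    show "\<forall>s. \<bar>t - s\<bar> < min t (1 - t) \<longrightarrow>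
        crra \<theta> (v - \<beta> (quantile s)) * D s ^ m \<le> crra \<theta> (v - \<beta> (quantile t)) * D t ^ m"
      unfolding v_def m_def using t by (intro allI impI truthful_quantile_optimal) (auto simp: abs_less_iff)
  qed
  moreover have "crra \<theta> (v - \<beta> (quantile t)) = w * w powr (- \<theta>) / (1 - \<theta>)"
    using crra_pos_eq[OF w] unfolding w_def v_def by simp
  ultimately have "w powr (- \<theta>) * D t ^ (m - 1) * (real m * d t * w - (1 - \<theta>) * D t * a) = 0"
    using theta_less_1 by (simp add: m field_simps)
  then have "real m * d t * w = (1 - \<theta>) * D t * a" using w Dt by simp
  then show ?thesis unfolding w_def v_def m_def by (simp add: algebra_simps)
qed

lemma bid_set_measurable: "{v \<in> {lo..hi}. \<beta> v \<le> b} \<in> sets (interval_measure F)"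
proof -
  have "{v \<in> {lo..hi}. \<beta> v \<le> b} = {lo..hi} \<inter> \<beta> -` {..b}" by auto
  then have "closed {v \<in> {lo..hi}. \<beta> v \<le> b}"
    using continuous_closed_preimage[OF continuous_on_\<beta>] by simp
  then show ?thesis by (simp add: borel_closed)
qed

lemma bid_cdf_below:
  assumes t: "t \<in> {0<..<1}" and b: "b < \<beta> (quantile t)"
  shows "bid_cdf lo hi F \<beta> b < t"
proof -
  have v: "lo < quantile t" "quantile t < hi" using quantile_interior[OF t] by auto
  have "continuous_on {lo..quantile t} \<beta>"
    using continuous_on_\<beta> by (rule continuous_on_subset) (use v in auto)
  then obtain x where x: "lo < x" "x < quantile t" "b < \<beta> x"
    using continuous_on_Icc_exceeds_left v(1) b by blast
  have "{v \<in> {lo..hi}. \<beta> v \<le> b} \<subseteq> {lo..x}"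
    using \<beta>_less[of x] x by (force simp: not_le[symmetric])
  then have "bid_cdf lo hi F \<beta> b \<le> measure (interval_measure F) {lo..x}"
    unfolding bid_cdf_def by (rule measure_mono_fmeasurable[OF _ bid_set_measurable fmeasurable_Icc])
  also have "\<dots> = F x" using measure_Icc x by simp
  also have "\<dots> < t" using F_less[of x "quantile t"] F_quantile t x v by simp
  finally show ?thesis .
qed

lemma bid_cdf_above:
  assumes t: "t \<in> {0<..<1}" and b: "\<beta> (quantile t) < b"
  shows "t < bid_cdf lo hi F \<beta> b"
proof -
  have v: "lo < quantile t" "quantile t < hi" using quantile_interior[OF t] by auto
  have "continuous_on {quantile t..hi} \<beta>"
    using continuous_on_\<beta> by (rule continuous_on_subset) (use v in auto)
  then obtain x where x: "quantile t < x" "x < hi" "\<beta> x < b"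
    using continuous_on_Icc_below_right v(2) b by blast
  have sub: "{lo..x} \<subseteq> {v \<in> {lo..hi}. \<beta> v \<le> b}"
    using \<beta>_less[of _ x] x v by (force simp: le_less)
  have "t < F x" using F_less[of "quantile t" x] F_quantile t x v by simp
  also have "\<dots> = measure (interval_measure F) {lo..x}" using measure_Icc x v by simp
  also have "\<dots> \<le> bid_cdf lo hi F \<beta> b"
    unfolding bid_cdf_def using bid_set_measurable
    by (intro measure_mono_fmeasurable[OF sub] fmeasurableI2[OF fmeasurable_Icc[of hi]]) auto
  finally show ?thesis .
qed

lemma bid_quantile_eq_if_bid_cdf_eq:
  assumes "auction_equilibrium lo' hi' F' f' D' d' \<theta>' n' \<beta>'"
    and "bid_cdf lo hi F \<beta> = bid_cdf lo' hi' F' \<beta>'" and "t \<in> {0<..<1}"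
  shows "\<beta>' (interval_cdf.quantile lo' hi' F' t) = \<beta> (quantile t)"
proof -
  interpret C: auction_equilibrium lo' hi' F' f' D' d' \<theta>' n' \<beta>' by fact
  show ?thesis
    by (rule quantile_point_unique[where G = "bid_cdf lo hi F \<beta>" and t = t])
      (use C.bid_cdf_below C.bid_cdf_above bid_cdf_below bid_cdf_above assms(2,3) in auto)
qed

lemma common_first_order_condition:
  assumes "auction_equilibrium lo' hi' F' f' D' d' \<theta>' n \<beta>'"
    and "bid_cdf lo hi F \<beta> = bid_cdf lo' hi' F' \<beta>'" and t: "t \<in> {0<..<1}"
  obtains a where "((\<lambda>s. \<beta> (quantile s)) has_real_derivative a) (at t)"
    and "(1 - \<theta>) * D t * a = real (n - 1) * (quantile t - \<beta> (quantile t)) * d t"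
    and "(1 - \<theta>') * D' t * a
          = real (n - 1) * (interval_cdf.quantile lo' hi' F' t - \<beta> (quantile t)) * d' t"
proof -
  interpret C: auction_equilibrium lo' hi' F' f' D' d' \<theta>' n \<beta>' by fact
  have same_bids: "\<And>s. s \<in> {0<..<1} \<Longrightarrow> \<beta>' (C.quantile s) = \<beta> (quantile s)"
    using bid_quantile_eq_if_bid_cdf_eq assms(1,2) by blast
  obtain a where a: "((\<lambda>s. \<beta> (quantile s)) has_real_derivative a) (at t)"
    using bid_quantile_deriv t by blast
  have "((\<lambda>s. \<beta>' (C.quantile s)) has_real_derivative a) (at t)"
    using has_field_derivative_transform_within_open[OF a, of "{0<..<1}"] same_bids t by auto
  then show ?thesis
    using that a first_order_condition[OF t a] C.first_order_condition[OF t] same_bids[OF t] by simp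
qed

end

locale identification =
  A1: auction_equilibrium lo hi F f D d \<theta> n1 \<beta>1 +
  A2: auction_equilibrium lo hi F f D d \<theta> n2 \<beta>2 +
  C1: auction_equilibrium lo' hi' F' f' D' d' \<theta>' n1 \<gamma>1 +
  C2: auction_equilibrium lo' hi' F' f' D' d' \<theta>' n2 \<gamma>2
  for lo hi F f D d \<theta> n1 \<beta>1 n2 \<beta>2 lo' hi' F' f' D' d' \<theta>' \<gamma>1 \<gamma>2 +
  assumes n1_less_n2: "n1 < n2"
    and same_bid_cdf1: "bid_cdf lo hi F \<beta>1 = bid_cdf lo' hi' F' \<gamma>1"
    and same_bid_cdf2: "bid_cdf lo hi F \<beta>2 = bid_cdf lo' hi' F' \<gamma>2"
begin

abbreviation V where "V \<equiv> interval_cdf.quantile lo hi F"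
abbreviation V' where "V' \<equiv> interval_cdf.quantile lo' hi' F'"

lemma common_foc1:
  assumes "t \<in> {0<..<1}"
  obtains a where "((\<lambda>s. \<beta>1 (V s)) has_real_derivative a) (at t)"
    and "(1 - \<theta>) * D t * a = real (n1 - 1) * (V t - \<beta>1 (V t)) * d t"
    and "(1 - \<theta>') * D' t * a = real (n1 - 1) * (V' t - \<beta>1 (V t)) * d' t"
  by (rule A1.common_first_order_condition[OF _ same_bid_cdf1 assms]) intro_locales

lemma common_foc2:
  assumes "t \<in> {0<..<1}"
  obtains a where "((\<lambda>s. \<beta>2 (V s)) has_real_derivative a) (at t)"
    and "(1 - \<theta>) * D t * a = real (n2 - 1) * (V t - \<beta>2 (V t)) * d t"
    and "(1 - \<theta>') * D' t * a = real (n2 - 1) * (V' t - \<beta>2 (V t)) * d' t"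
  by (rule A2.common_first_order_condition[OF _ same_bid_cdf2 assms]) intro_locales

lemma quantile_eq_at_separating_point:
  assumes t: "t \<in> {0<..<1}" and "0 < d t" and separating: "\<beta>1 (V t) \<noteq> \<beta>2 (V t)"
  shows "V t = V' t"
proof -
  obtain a1 where a1: "(1 - \<theta>) * D t * a1 = real (n1 - 1) * (V t - \<beta>1 (V t)) * d t"
    and a1': "(1 - \<theta>') * D' t * a1 = real (n1 - 1) * (V' t - \<beta>1 (V t)) * d' t"
    using common_foc1[OF t] .
  obtain a2 where a2: "(1 - \<theta>) * D t * a2 = real (n2 - 1) * (V t - \<beta>2 (V t)) * d t"
    and a2': "(1 - \<theta>') * D' t * a2 = real (n2 - 1) * (V' t - \<beta>2 (V t)) * d' t"
    using common_foc2[OF t] .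
  have "V t - \<beta>1 (V t) \<noteq> 0"
    using A1.bid_less_value A1.quantile_interior[OF t] by fastforce
  then have "a1 \<noteq> 0" using a1 \<open>0 < d t\<close> A1.two_le_n by auto
  then have "d' t \<noteq> 0"
    using a1' C1.D_pos[of t] C1.theta_less_1 t by auto
  then show ?thesis
    using linear_foc_system_unique[OF _ _ _ _ separating a1 a2 a1' a2'] \<open>0 < d t\<close>
      A1.two_le_n A2.two_le_n by simp
qed

lemma separating_points_dense:
  assumes "0 \<le> a" "a < b" "b \<le> 1"
  shows "\<exists>y\<in>{a<..<b}. 0 < d y \<and> \<beta>1 (V y) \<noteq> \<beta>2 (V y)"
proof -
  obtain z where z: "z \<in> {a<..<b}" "0 < d z"
    using A1.exists_pos_deriv_between[OF assms] .
  have "continuous_on {a<..<b} d"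
    by (rule continuous_on_subset[OF A1.continuous_on_d]) (use assms in auto)
  then have "open (d -` {0<..} \<inter> {a<..<b})"
    by (meson continuous_on_open_vimage open_greaterThan open_greaterThanLessThan)
  then obtain r where r: "0 < r" "ball z r \<subseteq> d -` {0<..} \<inter> {a<..<b}"
    using z by (auto elim: openE)
  show ?thesis
  proof (cases "\<beta>1 (V z) = \<beta>2 (V z)")
    case True
    have zt: "z \<in> {0<..<1}" using z assms by auto
    obtain a1 where a1: "((\<lambda>s. \<beta>1 (V s)) has_real_derivative a1) (at z)"
      and foc1: "(1 - \<theta>) * D z * a1 = real (n1 - 1) * (V z - \<beta>1 (V z)) * d z"
      using common_foc1[OF zt] .
    obtain a2 where a2: "((\<lambda>s. \<beta>2 (V s)) has_real_derivative a2) (at z)"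
      and foc2: "(1 - \<theta>) * D z * a2 = real (n2 - 1) * (V z - \<beta>2 (V z)) * d z"
      using common_foc2[OF zt] .
    \<comment> \<open>Where the bids coincide, the first-order conditions force different slopes.\<close>
    have "a1 \<noteq> a2"
    proof
      assume "a1 = a2"
      then have "real (n1 - 1) * ((V z - \<beta>1 (V z)) * d z) = real (n2 - 1) * ((V z - \<beta>1 (V z)) * d z)"
        using foc1 foc2 True by (metis mult.assoc)
      moreover have "(V z - \<beta>1 (V z)) * d z \<noteq> 0"
        using A1.bid_less_value A1.quantile_interior[OF zt] z(2) by fastforce
      ultimately show False using n1_less_n2 A1.two_le_n by simp
    qed
    then obtain y where y: "\<bar>z - y\<bar> < r" "\<beta>2 (V z) - \<beta>1 (V z) \<noteq> \<beta>2 (V y) - \<beta>1 (V y)"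
      using DERIV_local_const[OF DERIV_diff[OF a2 a1] r(1)] by auto
    then have "y \<in> d -` {0<..} \<inter> {a<..<b}" using r(2) by (auto simp: dist_real_def)
    then show ?thesis using y(2) True by auto
  qed (use z in auto)
qed

lemma quantile_eq: "t \<in> {0..1} \<Longrightarrow> V t = V' t"
proof (rule continuous_on_Icc_eq_if_eq_densely[where f = V and g = V'])
  fix x y :: real assume "0 \<le> x" "x < y" "y \<le> 1"
  then obtain z where "z \<in> {x<..<y}" "0 < d z" "\<beta>1 (V z) \<noteq> \<beta>2 (V z)"
    using separating_points_dense by blast
  moreover from this have "z \<in> {0<..<1}" using \<open>0 \<le> x\<close> \<open>y \<le> 1\<close> by auto
  ultimately show "\<exists>z\<in>{x<..<y}. V z = V' z"
    using quantile_eq_at_separating_point by blast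
qed (use A1.continuous_on_quantile C1.continuous_on_quantile in auto)

lemma distortion_ratio_eq:
  assumes t: "t \<in> {0<..<1}"
  shows "(1 - \<theta>') * D' t * d t = (1 - \<theta>) * D t * d' t"
proof -
  define w where "w = real (n1 - 1) * (V t - \<beta>1 (V t))"
  obtain a where a: "(1 - \<theta>) * D t * a = w * d t" and a': "(1 - \<theta>') * D' t * a = w * d' t"
    using common_foc1[OF t] quantile_eq[of t] t unfolding w_def by auto
  have "w \<noteq> 0"
    using A1.bid_less_value A1.quantile_interior[OF t] A1.two_le_n unfolding w_def by fastforce
  have "w * ((1 - \<theta>') * D' t * d t) = (1 - \<theta>') * D' t * (w * d t)" by (simp add: algebra_simps)
  also have "\<dots> = (1 - \<theta>') * D' t * ((1 - \<theta>) * D t * a)" by (simp only: a)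
  also have "\<dots> = (1 - \<theta>) * D t * ((1 - \<theta>') * D' t * a)" by (simp add: algebra_simps)
  also have "\<dots> = (1 - \<theta>) * D t * (w * d' t)" by (simp only: a')
  also have "\<dots> = w * ((1 - \<theta>) * D t * d' t)" by (simp add: algebra_simps)
  finally show ?thesis using \<open>w \<noteq> 0\<close> by simp
qed

lemma theta_eq: "\<theta> = \<theta>'"
proof -
  have lim: "((\<lambda>t. (1 - \<theta>') * (D' t / t) * d t) \<longlongrightarrow> (1 - \<theta>') * d' 0 * d 0) (at_right 0)"
    "((\<lambda>t. (1 - \<theta>) * (D t / t) * d' t) \<longlongrightarrow> (1 - \<theta>) * d 0 * d' 0) (at_right 0)"
    by (intro tendsto_mult tendsto_const A1.d_tendsto_0 A1.D_over_id_tendsto_0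
        C1.d_tendsto_0 C1.D_over_id_tendsto_0)+
  have "eventually (\<lambda>t. (1 - \<theta>') * (D' t / t) * d t = (1 - \<theta>) * (D t / t) * d' t) (at_right 0)"
  proof (rule eventually_mono[OF eventually_at_right_real[of 0 1]])
    fix t :: real assume t: "t \<in> {0<..<1}"
    have "(1 - \<theta>') * (D' t / t) * d t = (1 - \<theta>') * D' t * d t / t" by simp
    also have "\<dots> = (1 - \<theta>) * D t * d' t / t" using distortion_ratio_eq[OF t] by simp
    also have "\<dots> = (1 - \<theta>) * (D t / t) * d' t" by simp
    finally show "(1 - \<theta>') * (D' t / t) * d t = (1 - \<theta>) * (D t / t) * d' t" .
  qed simp
  then have "(1 - \<theta>') * d' 0 * d 0 = (1 - \<theta>) * d 0 * d' 0"
    using tendsto_unique[OF _ Lim_transform_eventually[OF lim(1)] lim(2)] by simp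
  then show ?thesis using A1.d_0_pos C1.d_0_pos by simp
qed

lemma distortion_eq:
  assumes "t \<in> {0..1}"
  shows "D t = D' t"
proof (cases "t = 0")
  case False
  then have t: "0 < t" "t \<le> 1" using assms by auto
  have "D 1 / D' 1 = D t / D' t"
  proof (cases "t = 1")
    case False
    show ?thesis
    proof (rule DERIV_isconst_end[where f = "\<lambda>x. D x / D' x"])
      show "t < 1" using t False by simp
      have "D' x \<noteq> 0" if "x \<in> {t..1}" for x using C1.D_pos[of x] t that by auto
      then show "continuous_on {t..1} (\<lambda>x. D x / D' x)"
        by (intro continuous_on_divide continuous_on_subset[OF A1.continuous_on_D]
            continuous_on_subset[OF C1.continuous_on_D]) (use t in auto)
      fix x assume x: "t < x" "x < 1"
      then have xt: "x \<in> {0<..<1}" using t by simp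
      have "((\<lambda>x. D x / D' x) has_real_derivative (d x * D' x - D x * d' x) / (D' x * D' x)) (at x)"
        using C1.D_pos[of x] xt by (intro DERIV_divide A1.D_deriv_at C1.D_deriv_at) auto
      moreover have "(1 - \<theta>) * (d x * D' x) = (1 - \<theta>) * (D x * d' x)"
        using distortion_ratio_eq[OF xt] theta_eq by (simp add: ac_simps)
      then have "d x * D' x - D x * d' x = 0" using A1.theta_less_1 by simp
      ultimately show "((\<lambda>x. D x / D' x) has_real_derivative 0) (at x)" by simp
    qed
  qed simp
  then show ?thesis using C1.D_pos[OF t] by (simp add: field_simps)
qed simp

lemma cdf_eq: "F = F'"
  by (rule A1.cdf_eq_if_quantile_eq[OF _ quantile_eq]) intro_locales

end

lemma value_cdfE:
  assumes "value_cdf lo hi F"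
  obtains f where "interval_cdf lo hi F f"
  using assms unfolding value_cdf_def interval_cdf_def by blast

lemma distortionE:
  assumes "distortion D"
  obtains d where "smooth_distortion D d"
  using assms unfolding distortion_def smooth_distortion_def by blast

theorem proposition3:
  fixes n1 n2 :: nat
    and vlo vhi vlo' vhi' \<theta> \<theta>' :: real
    and F0 D F0' D' \<beta>1 \<beta>2 \<beta>1' \<beta>2' :: "real \<Rightarrow> real"
  assumes "2 \<le> n1" and "n1 < n2"
    and "model_structure vlo vhi F0 D \<theta>"
    and "model_structure vlo' vhi' F0' D' \<theta>'"
    and "equilibrium vlo vhi F0 D \<theta> n1 \<beta>1"
    and "equilibrium vlo vhi F0 D \<theta> n2 \<beta>2"
    and "equilibrium vlo' vhi' F0' D' \<theta>' n1 \<beta>1'"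
    and "equilibrium vlo' vhi' F0' D' \<theta>' n2 \<beta>2'"
    and "bid_cdf vlo vhi F0 \<beta>1 = bid_cdf vlo' vhi' F0' \<beta>1'"
    and "bid_cdf vlo vhi F0 \<beta>2 = bid_cdf vlo' vhi' F0' \<beta>2'"
  shows "F0 = F0' \<and> (\<forall>\<gamma>\<in>{0..1}. D \<gamma> = D' \<gamma>) \<and> \<theta> = \<theta>'"
proof -
  obtain f d where "interval_cdf vlo vhi F0 f" "smooth_distortion D d" "\<theta> < 1"
    using assms(3) value_cdfE distortionE unfolding model_structure_def by metis
  moreover obtain f' d' where "interval_cdf vlo' vhi' F0' f'" "smooth_distortion D' d'" "\<theta>' < 1"
    using assms(4) value_cdfE distortionE unfolding model_structure_def by metis
  ultimately interpret identification vlo vhi F0 f D d \<theta> n1 \<beta>1 n2 \<beta>2 vlo' vhi' F0' f' D' d' \<theta>' \<beta>1' \<beta>2'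
    using assms by (simp add: identification_def identification_axioms_def
        auction_equilibrium_def auction_equilibrium_axioms_def)
  show ?thesis using cdf_eq distortion_eq theta_eq by blast
qed

end
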